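(* Let $p\geq 2$ be an integer (not necessarily prime) and $r\in\{1,\ldots,p-1\}$. Define integers $D_{p,r}(n)$ by $$\prod_{i=0}^{\infty}\big(1-x^{p^{i}}\big)^{r}=\sum_{n=0}^{\infty}D_{p,r}(n)x^{n}.$$ Then for every $n\in\mathbb{N}$, $$D_{p,r}(n)=\prod_{i=0}^{p-1}(-1)^{iN_{p}(i,n)}\binom{r}{i}^{N_{p}(i,n)},$$ with the conventions $\binom{a}{b}=0$ for $b>a$ and $0^{0}=1$. Moreover, for every $j\in\{0,\ldots,p-1\}$ and every positive integer $n$, $$D_{p,r}(pn+j)=(-1)^{j}\binom{r}{j}D_{p,r}(n).$$
   Context: For integers $p\geq 2$, $n\geq 0$ and $i\in\{0,\ldots,p-1\}$, $N_p(i,n)$ denotes the number of digits equal to $i$ in the (unique) base-$p$ expansion $n=\sum_{j}\varepsilon_j p^j$, $\varepsilon_j\in\{0,\ldots,p-1\}$ (with $N_p(i,0)=0$). *)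

theory Defs
  imports "HOL-Computational_Algebra.Formal_Power_Series"
begin

text \<open>Number of digits equal to i in the base-p expansion of n. The digit positions
  of n \<ge> 1 are exactly the j with p^j \<le> n; for n = 0 there are none.\<close>
definition Ndig :: "nat \<Rightarrow> nat \<Rightarrow> nat \<Rightarrow> nat" where
  "Ndig p i n = card {j. p ^ j \<le> n \<and> (n div p ^ j) mod p = i}"

definition infprod_Dpr :: "nat \<Rightarrow> nat \<Rightarrow> int fps" where
  "infprod_Dpr p r = lim (\<lambda>K. \<Prod>i<K. (1 - fps_X ^ (p ^ i)) ^ r)"

definition D :: "nat \<Rightarrow> nat \<Rightarrow> nat \<Rightarrow> int" where
  "D p r n = fps_nth (infprod_Dpr p r) n"

end

theory Submission
  imports Defs
begin

text \<open>Since r < p, the factor (1 - X)^r = \<Sum>j<p. c j X^j with c j = (-1)^j (r choose j) has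
  degree below p. Multiplying out \<Prod>i<K. (1 - X^(p^i))^r therefore picks one exponent j_i < p
  per factor, and by uniqueness of base-p expansions every n < p^K arises exactly once, as
  n = \<Sum>i. j_i p^i, with coefficient \<Prod>i. c j_i. So D p r is the digit-multiplicative
  function with digit weights c, and both claims follow.\<close>

lemma finite_exponents_power_le:
  fixes p n :: nat
  assumes "2 \<le> p"
  shows "finite {j. p ^ j \<le> n}"
proof (rule finite_subset)
  show "{j. p ^ j \<le> n} \<subseteq> {..n}"
  proof
    fix j assume "j \<in> {j. p ^ j \<le> n}"
    have "j < 2 ^ j" by (rule less_exp)
    also have "\<dots> \<le> p ^ j" using assms by (simp add: power_mono)
    also have "\<dots> \<le> n" using \<open>j \<in> _\<close> by simp
    finally show "j \<in> {..n}" by simp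
  qed
qed simp

lemma Ndig_0 [simp]: "2 \<le> p \<Longrightarrow> Ndig p i 0 = 0"
  by (simp add: Ndig_def)

lemma Ndig_eq_Ndig_div:
  assumes p: "2 \<le> p" and n: "0 < n"
  shows "Ndig p i n = Ndig p i (n div p) + (if n mod p = i then 1 else 0)"
proof -
  let ?A = "\<lambda>n. {j. p ^ j \<le> n \<and> (n div p ^ j) mod p = i}"
  have "?A n = (if n mod p = i then {0} else {}) \<union> Suc ` ?A (n div p)"
  proof (rule set_eqI)
    fix j
    show "j \<in> ?A n \<longleftrightarrow> j \<in> (if n mod p = i then {0} else {}) \<union> Suc ` ?A (n div p)"
    proof (cases j)
      case (Suc k)
      have "p ^ Suc k \<le> n \<longleftrightarrow> p ^ k \<le> n div p"
        using p by (simp add: less_eq_div_iff_mult_less_eq mult.commute)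
      moreover have "n div p ^ Suc k = n div p div p ^ k"
        by (simp add: div_mult2_eq)
      ultimately show ?thesis using Suc by auto
    qed (use n in auto)
  qed
  moreover have "finite (?A m)" for m
    by (rule finite_subset[OF _ finite_exponents_power_le[OF p, of m]]) auto
  ultimately have "card (?A n) = card (if n mod p = i then {0::nat} else {}) + card (?A (n div p))"
    by (simp add: card_Un_disjoint card_image)
  then show ?thesis unfolding Ndig_def by simp
qed

definition digit_prod :: "nat \<Rightarrow> (nat \<Rightarrow> 'a :: comm_monoid_mult) \<Rightarrow> nat \<Rightarrow> 'a" where
  "digit_prod p c n = (\<Prod>i<p. c i ^ Ndig p i n)"

lemma digit_prod_mult_add:
  assumes p: "2 \<le> p" and c0: "c 0 = 1" and j: "j < p"
  shows "digit_prod p c (p * n + j) = c j * digit_prod p c n"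
proof (cases "p * n + j = 0")
  case True
  then show ?thesis using p c0 by (simp add: digit_prod_def)
next
  case False
  have "(p * n + j) mod p = j" "(p * n + j) div p = n" using j by auto
  then have "digit_prod p c (p * n + j) = (\<Prod>i<p. c i ^ Ndig p i n * (if j = i then c i else 1))"
    using Ndig_eq_Ndig_div[OF p, of "p * n + j"] False
    by (auto simp: digit_prod_def power_add intro!: prod.cong)
  also have "\<dots> = digit_prod p c n * c j"
    using j by (simp add: prod.distrib digit_prod_def prod.delta)
  finally show ?thesis by (simp add: mult.commute)
qed

lemma sum_lessThan_mult_split:
  fixes n k :: nat
  shows "(\<Sum>m<n * k. g m) = (\<Sum>i<n. \<Sum>j<k. g (i * k + j))"
proof -
  have "(\<Sum>m\<in>{i * k..<i * k + k}. g m) = (\<Sum>j<k. g (i * k + j))" for i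
    using sum.shift_bounds_nat_ivl[of g 0 "i * k" k] by (simp add: add.commute atLeast0LessThan)
  then show ?thesis by (simp flip: sum.nat_group)
qed

lemma prod_digit_poly_eq_sum_digit_prod:
  fixes c :: "nat \<Rightarrow> 'a :: comm_semiring_1"
  assumes p: "2 \<le> p" and c0: "c 0 = 1"
  shows "(\<Prod>i<K. \<Sum>j<p. fps_const (c j) * fps_X ^ (M * p ^ i * j)) =
    (\<Sum>n<p ^ K. fps_const (digit_prod p c n) * fps_X ^ (M * n))"
proof (induction K arbitrary: M)
  case 0
  then show ?case by (simp add: digit_prod_def Ndig_def)
next
  case (Suc K)
  txt \<open>Generalising over M lets the induction peel off the factor i = 0: the remaining
    factors form the same product in X^p, i.e. with M replaced by M * p.\<close>
  let ?d = "digit_prod p c"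
  have "(\<Prod>i<Suc K. \<Sum>j<p. fps_const (c j) * fps_X ^ (M * p ^ i * j)) =
      (\<Sum>j<p. fps_const (c j) * fps_X ^ (M * j)) *
      (\<Prod>i<K. \<Sum>j<p. fps_const (c j) * fps_X ^ ((M * p) * p ^ i * j))"
    unfolding prod.lessThan_Suc_shift by (simp add: mult_ac)
  also have "\<dots> = (\<Sum>j<p. fps_const (c j) * fps_X ^ (M * j)) *
      (\<Sum>n<p ^ K. fps_const (?d n) * fps_X ^ (M * p * n))"
    by (simp only: Suc.IH)
  also have "\<dots> = (\<Sum>n<p ^ K. \<Sum>j<p.
      (fps_const (c j) * fps_X ^ (M * j)) * (fps_const (?d n) * fps_X ^ (M * p * n)))"
    by (subst sum.swap) (rule sum_product)
  also have "\<dots> = (\<Sum>n<p ^ K. \<Sum>j<p. fps_const (?d (n * p + j)) * fps_X ^ (M * (n * p + j)))"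
  proof (intro sum.cong refl)
    fix n j assume "j \<in> {..<p}"
    then have "?d (n * p + j) = c j * ?d n"
      using digit_prod_mult_add[OF p, where c = c, OF c0] by (simp add: mult.commute)
    then show "fps_const (c j) * fps_X ^ (M * j) * (fps_const (?d n) * fps_X ^ (M * p * n)) =
        fps_const (?d (n * p + j)) * fps_X ^ (M * (n * p + j))"
      by (simp add: power_add algebra_simps flip: fps_const_mult)
  qed
  also have "\<dots> = (\<Sum>n<p ^ Suc K. fps_const (?d n) * fps_X ^ (M * n))"
    by (simp only: power_Suc2 sum_lessThan_mult_split)
  finally show ?case .
qed

lemma one_minus_fps_X_power_power:
  assumes "r < N"
  shows "(1 - fps_X ^ M :: 'a :: comm_ring_1 fps) ^ r =
    (\<Sum>k<N. fps_const ((-1) ^ k * of_nat (r choose k)) * fps_X ^ (M * k))"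
proof -
  have "(1 - fps_X ^ M :: 'a fps) ^ r = (\<Sum>k\<le>r. of_nat (r choose k) * (- (fps_X ^ M)) ^ k)"
    using binomial_ring[of "- (fps_X ^ M) :: 'a fps" 1 r] by simp
  also have "\<dots> = (\<Sum>k\<le>r. fps_const ((-1) ^ k * of_nat (r choose k)) * fps_X ^ (M * k))"
  proof (rule sum.cong[OF refl])
    fix k
    have "fps_const ((-1) ^ k * of_nat (r choose k)) = ((-1) ^ k * of_nat (r choose k) :: 'a fps)"
      by (simp add: fps_of_nat flip: fps_const_power fps_const_neg fps_const_mult)
    then show "of_nat (r choose k) * (- (fps_X ^ M)) ^ k =
        fps_const ((-1) ^ k * of_nat (r choose k)) * (fps_X ^ (M * k) :: 'a fps)"
      by (simp add: power_minus[of "fps_X ^ M"] power_mult mult_ac)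
  qed
  also have "\<dots> = (\<Sum>k<N. fps_const ((-1) ^ k * of_nat (r choose k)) * fps_X ^ (M * k))"
    using assms by (intro sum.mono_neutral_left) (auto simp: binomial_eq_0 not_le)
  finally show ?thesis .
qed

lemma tendsto_fps_truncations:
  assumes "filterlim N at_top F"
  shows "((\<lambda>x. \<Sum>n<N x. fps_const (a n) * fps_X ^ n) \<longlongrightarrow> Abs_fps a) F"
proof (rule tendsto_fpsI)
  fix n
  have "eventually (\<lambda>x. Suc n \<le> N x) F"
    using assms by (simp add: filterlim_at_top)
  then show "eventually (\<lambda>x. fps_nth (\<Sum>m<N x. fps_const (a m) * fps_X ^ m) n = fps_nth (Abs_fps a) n) F"
    by eventually_elim (simp add: fps_sum_nth mult_delta_right)
qed

lemma filterlim_power_sequentially: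
  fixes p :: nat
  assumes "2 \<le> p"
  shows "filterlim (\<lambda>K. p ^ K) at_top sequentially"
  by (rule filterlim_subseq, rule strict_mono_Suc_iff[THEN iffD2]) (use assms in simp)

lemma D_eq_digit_prod:
  assumes p: "2 \<le> p" and r: "r < p"
  shows "D p r n = digit_prod p (\<lambda>k. (-1) ^ k * int (r choose k)) n"
proof -
  let ?c = "\<lambda>k. (-1) ^ k * int (r choose k)"
  have "(\<Prod>i<K. (1 - fps_X ^ (p ^ i)) ^ r :: int fps) =
      (\<Sum>n<p ^ K. fps_const (digit_prod p ?c n) * fps_X ^ n)" for K
    using prod_digit_poly_eq_sum_digit_prod[OF p, where c = ?c and K = K and M = 1]
    by (simp add: one_minus_fps_X_power_power[OF r])
  then have "infprod_Dpr p r = Abs_fps (digit_prod p ?c)"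
    unfolding infprod_Dpr_def
    by (simp add: limI tendsto_fps_truncations filterlim_power_sequentially[OF p])
  then show ?thesis by (simp add: D_def)
qed

theorem lemma2p1:
  fixes p r :: nat
  assumes "p \<ge> 2" and "1 \<le> r" and "r \<le> p - 1"
  shows "(\<forall>n. D p r n =
            (\<Prod>i<p. (-1) ^ (i * Ndig p i n) * (int (r choose i)) ^ Ndig p i n))
       \<and> (\<forall>j n. j < p \<longrightarrow> n > 0 \<longrightarrow>
            D p r (p * n + j) = (-1) ^ j * int (r choose j) * D p r n)"
proof -
  have p: "2 \<le> p" and r: "r < p" using assms by auto
  let ?c = "\<lambda>k. (-1) ^ k * int (r choose k)"
  have "D p r n = (\<Prod>i<p. (-1) ^ (i * Ndig p i n) * (int (r choose i)) ^ Ndig p i n)" for n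
    by (simp add: D_eq_digit_prod[OF p r] digit_prod_def power_mult power_mult_distrib)
  moreover have "D p r (p * n + j) = (-1) ^ j * int (r choose j) * D p r n" if "j < p" for j n
    using digit_prod_mult_add[OF p, where c = ?c, OF _ that] by (simp add: D_eq_digit_prod[OF p r])
  ultimately show ?thesis by blast
qed

end
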